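(* Let $P$ be a finite graded poset of rank $r$ (all maximal chains have length $r$) such that $J(P)$ is tCDE. Then \[\mathbb{E}(\mathrm{uni}_{J(P)};\mathrm{ddeg})=\frac{\#P}{r+2}.\]
   Context: $J(P)$ is the poset of order ideals of $P$ ordered by inclusion; $\mathrm{ddeg}(I)$ is the number of elements of $J(P)$ covered by $I$ (equivalently $\#\max(I)$); $\mathrm{uni}_{J(P)}$ is uniform; $\mathbb{E}(\mu;f)=\sum_I f(I)\mathbb{P}(\mu;I)$. $\mathcal{T}^+_p(I)=1$ iff $p\notin I$ and $p$ is minimal in $P\setminus I$; $\mathcal{T}^-_p(I)=1$ iff $p\in I$ and $p$ is maximal in $I$ (else $0$). $\mu$ is toggle-symmetric if $\mathbb{E}(\mu;\mathcal{T}^+_p)=\mathbb{E}(\mu;\mathcal{T}^-_p)$ for all $p\in P$. $J(P)$ is tCDE if $\mathbb{E}(\mu;\mathrm{ddeg})=\mathbb{E}(\mathrm{uni}_{J(P)};\mathrm{ddeg})$ for every toggle-symmetric distribution $\mu$ on $J(P)$. *)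

theory Defs
  imports Main "HOL-Library.Multiset" Complex_Main
begin

definition poset_on :: "'a set \<Rightarrow> ('a \<Rightarrow> 'a \<Rightarrow> bool) \<Rightarrow> bool" where
  "poset_on P le \<longleftrightarrow>
     (\<forall>x\<in>P. le x x) \<and>
     (\<forall>x\<in>P. \<forall>y\<in>P. le x y \<and> le y x \<longrightarrow> x = y) \<and>
     (\<forall>x\<in>P. \<forall>y\<in>P. \<forall>z\<in>P. le x y \<and> le y z \<longrightarrow> le x z)"

definition is_chain :: "'a set \<Rightarrow> ('a \<Rightarrow> 'a \<Rightarrow> bool) \<Rightarrow> 'a set \<Rightarrow> bool" where
  "is_chain P le C \<longleftrightarrow> C \<subseteq> P \<and> (\<forall>x\<in>C. \<forall>y\<in>C. le x y \<or> le y x)"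

definition is_maximal_chain :: "'a set \<Rightarrow> ('a \<Rightarrow> 'a \<Rightarrow> bool) \<Rightarrow> 'a set \<Rightarrow> bool" where
  "is_maximal_chain P le C \<longleftrightarrow>
     is_chain P le C \<and> (\<forall>D. is_chain P le D \<and> C \<subseteq> D \<longrightarrow> D = C)"

(* graded of rank r: every maximal chain has length r, i.e. r+1 elements *)
definition graded_of_rank :: "'a set \<Rightarrow> ('a \<Rightarrow> 'a \<Rightarrow> bool) \<Rightarrow> nat \<Rightarrow> bool" where
  "graded_of_rank P le r \<longleftrightarrow>
     (\<forall>C. is_maximal_chain P le C \<longrightarrow> card C = r + 1)"

definition order_ideals :: "'a set \<Rightarrow> ('a \<Rightarrow> 'a \<Rightarrow> bool) \<Rightarrow> 'a set set" where
  "order_ideals P le = {I. I \<subseteq> P \<and> (\<forall>x\<in>I. \<forall>y\<in>P. le y x \<longrightarrow> y \<in> I)}"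

definition maximal_elems :: "('a \<Rightarrow> 'a \<Rightarrow> bool) \<Rightarrow> 'a set \<Rightarrow> 'a set" where
  "maximal_elems le A = {x\<in>A. \<forall>y\<in>A. le x y \<longrightarrow> y = x}"

definition minimal_elems :: "('a \<Rightarrow> 'a \<Rightarrow> bool) \<Rightarrow> 'a set \<Rightarrow> 'a set" where
  "minimal_elems le A = {x\<in>A. \<forall>y\<in>A. le y x \<longrightarrow> y = x}"

(* ddeg(I) = #max(I) = number of elements of J(P) covered by I *)
definition ddeg :: "('a \<Rightarrow> 'a \<Rightarrow> bool) \<Rightarrow> 'a set \<Rightarrow> real" where
  "ddeg le I = real (card (maximal_elems le I))"

definition toggle_plus :: "'a set \<Rightarrow> ('a \<Rightarrow> 'a \<Rightarrow> bool) \<Rightarrow> 'a \<Rightarrow> 'a set \<Rightarrow> real" where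
  "toggle_plus P le p I = (if p \<notin> I \<and> p \<in> minimal_elems le (P - I) then 1 else 0)"

definition toggle_minus :: "('a \<Rightarrow> 'a \<Rightarrow> bool) \<Rightarrow> 'a \<Rightarrow> 'a set \<Rightarrow> real" where
  "toggle_minus le p I = (if p \<in> I \<and> p \<in> maximal_elems le I then 1 else 0)"

definition is_distribution :: "'a set \<Rightarrow> ('a \<Rightarrow> 'a \<Rightarrow> bool) \<Rightarrow> ('a set \<Rightarrow> real) \<Rightarrow> bool" where
  "is_distribution P le \<mu> \<longleftrightarrow>
     (\<forall>I\<in>order_ideals P le. \<mu> I \<ge> 0) \<and> (\<Sum>I\<in>order_ideals P le. \<mu> I) = 1"

definition expect :: "'a set \<Rightarrow> ('a \<Rightarrow> 'a \<Rightarrow> bool) \<Rightarrow> ('a set \<Rightarrow> real) \<Rightarrow> ('a set \<Rightarrow> real) \<Rightarrow> real" where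
  "expect P le \<mu> f = (\<Sum>I\<in>order_ideals P le. f I * \<mu> I)"

definition uni :: "'a set \<Rightarrow> ('a \<Rightarrow> 'a \<Rightarrow> bool) \<Rightarrow> 'a set \<Rightarrow> real" where
  "uni P le I = 1 / real (card (order_ideals P le))"

definition toggle_symmetric :: "'a set \<Rightarrow> ('a \<Rightarrow> 'a \<Rightarrow> bool) \<Rightarrow> ('a set \<Rightarrow> real) \<Rightarrow> bool" where
  "toggle_symmetric P le \<mu> \<longleftrightarrow>
     (\<forall>p\<in>P. expect P le \<mu> (toggle_plus P le p) = expect P le \<mu> (toggle_minus le p))"

definition tCDE :: "'a set \<Rightarrow> ('a \<Rightarrow> 'a \<Rightarrow> bool) \<Rightarrow> bool" where
  "tCDE P le \<longleftrightarrow>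
     (\<forall>\<mu>. is_distribution P le \<mu> \<and> toggle_symmetric P le \<mu> \<longrightarrow>
        expect P le \<mu> (ddeg le) = expect P le (uni P le) (ddeg le))"

end

theory Submission
  imports Defs
begin

text \<open>Let \<open>h p\<close> be the largest size of a chain with top \<open>p\<close>. In a poset graded of rank \<open>r\<close>,
  the down-sets \<open>I\<^sub>k = {p. h p \<le> k}\<close>, \<open>k = 0, \<dots>, r + 1\<close>, have \<open>max I\<^sub>k = {p. h p = k}\<close>, and
  \<open>p\<close> is minimal in the complement of \<open>I\<^sub>k\<close> exactly when \<open>h p = k + 1\<close>; the first fact
  uses gradedness through \<open>h p + h\<^sup>* p = r + 2\<close>, where \<open>h\<^sup>*\<close> is the height in the dual
  order. So under the uniform distribution on these \<open>r + 2\<close> ideals every \<open>p\<close> can be toggled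
  in and toggled out with the same probability \<open>1/(r + 2)\<close>, while the expected number of
  maximal elements is \<open>#P/(r + 2)\<close>. The tCDE property transfers this expectation to the
  uniform distribution on \<open>J(P)\<close>.\<close>

definition height :: "'a set \<Rightarrow> ('a \<Rightarrow> 'a \<Rightarrow> bool) \<Rightarrow> 'a \<Rightarrow> nat" where
  "height P le p = Max (card ` {C. is_chain P le C \<and> p \<in> C \<and> (\<forall>x\<in>C. le x p)})"

definition height_ideal :: "'a set \<Rightarrow> ('a \<Rightarrow> 'a \<Rightarrow> bool) \<Rightarrow> nat \<Rightarrow> 'a set" where
  "height_ideal P le k = {p\<in>P. height P le p \<le> k}"

definition empirical_distribution :: "'k set \<Rightarrow> ('k \<Rightarrow> 'a set) \<Rightarrow> 'a set \<Rightarrow> real" where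
  "empirical_distribution K F I = real (card {k\<in>K. F k = I}) / real (card K)"

lemma is_chain_dual: "is_chain P (\<lambda>x y. le y x) C \<longleftrightarrow> is_chain P le C"
  unfolding is_chain_def by blast

lemma finite_order_ideals: "finite P \<Longrightarrow> finite (order_ideals P le)"
  by (rule finite_subset[of _ "Pow P"]) (auto simp: order_ideals_def)

lemma expect_empirical_distribution:
  assumes "finite (order_ideals P le)" "F ` K \<subseteq> order_ideals P le" "finite K"
  shows "expect P le (empirical_distribution K F) f = (\<Sum>k\<in>K. f (F k)) / real (card K)"
proof -
  have "(\<Sum>k\<in>K. f (F k)) = (\<Sum>I\<in>order_ideals P le. \<Sum>k\<in>{k\<in>K. F k = I}. f (F k))"
    using assms by (intro sum.group[symmetric]) auto
  also have "\<dots> = (\<Sum>I\<in>order_ideals P le. f I * real (card {k\<in>K. F k = I}))"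
    by (intro sum.cong refl) (simp add: sum.cong[of _ _ "\<lambda>k. f (F k)" "\<lambda>_. f _"])
  finally show ?thesis
    unfolding expect_def empirical_distribution_def by (simp add: sum_divide_distrib)
qed

lemma is_distribution_empirical_distribution:
  assumes "finite (order_ideals P le)" "F ` K \<subseteq> order_ideals P le" "finite K" "K \<noteq> {}"
  shows "is_distribution P le (empirical_distribution K F)"
proof -
  have "(\<Sum>I\<in>order_ideals P le. empirical_distribution K F I)
      = expect P le (empirical_distribution K F) (\<lambda>_. 1)"
    unfolding expect_def by simp
  also have "\<dots> = 1"
    using assms by (simp add: expect_empirical_distribution)
  finally show ?thesis
    unfolding is_distribution_def by (simp add: empirical_distribution_def)
qed

locale finite_poset =
  fixes P :: "'a set" and le :: "'a \<Rightarrow> 'a \<Rightarrow> bool"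
  assumes finite: "finite P" and poset: "poset_on P le"
begin

lemma refl: "x \<in> P \<Longrightarrow> le x x"
  using poset unfolding poset_on_def by blast

lemma antisym: "x \<in> P \<Longrightarrow> y \<in> P \<Longrightarrow> le x y \<Longrightarrow> le y x \<Longrightarrow> x = y"
  using poset unfolding poset_on_def by blast

lemma trans: "x \<in> P \<Longrightarrow> y \<in> P \<Longrightarrow> z \<in> P \<Longrightarrow> le x y \<Longrightarrow> le y z \<Longrightarrow> le x z"
  using poset unfolding poset_on_def by blast

lemma dual: "finite_poset P (\<lambda>x y. le y x)"
  using finite poset unfolding finite_poset_def poset_on_def by blast

lemma chain_subset: "is_chain P le C \<Longrightarrow> C \<subseteq> P"
  unfolding is_chain_def by blast

lemma chain_finite: "is_chain P le C \<Longrightarrow> finite C"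
  using chain_subset finite finite_subset by blast

lemma chain_total: "is_chain P le C \<Longrightarrow> x \<in> C \<Longrightarrow> y \<in> C \<Longrightarrow> le x y \<or> le y x"
  unfolding is_chain_def by blast

lemma maximal_chain_extension:
  assumes "is_chain P le C"
  obtains D where "is_maximal_chain P le D" "C \<subseteq> D"
proof -
  let ?S = "{D. is_chain P le D \<and> C \<subseteq> D}"
  have "finite ?S"
    by (rule finite_subset[of _ "Pow P"]) (auto simp: is_chain_def finite)
  moreover have "C \<in> ?S"
    using assms by auto
  ultimately obtain D where D: "D \<in> ?S" "card D = Max (card ` ?S)"
    using Max_in[of "card ` ?S"] by fastforce
  have "is_maximal_chain P le D"
    unfolding is_maximal_chain_def
  proof (intro conjI allI impI)
    show "is_chain P le D"
      using D by simp
    fix D' assume D': "is_chain P le D' \<and> D \<subseteq> D'"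
    then have "card D' \<le> card D"
      using D \<open>finite ?S\<close>
      by (metis (mono_tags, lifting) Max_ge finite_imageI imageI mem_Collect_eq subset_trans)
    then show "D' = D"
      using D' chain_finite card_seteq by blast
  qed
  then show ?thesis
    using that D by blast
qed

lemma finite_chains_with_top: "finite {C. is_chain P le C \<and> p \<in> C \<and> (\<forall>x\<in>C. le x p)}"
  by (rule finite_subset[of _ "Pow P"]) (auto simp: is_chain_def finite)

lemma card_le_height:
  "is_chain P le C \<Longrightarrow> p \<in> C \<Longrightarrow> \<forall>x\<in>C. le x p \<Longrightarrow> card C \<le> height P le p"
  unfolding height_def by (rule Max_ge) (use finite_chains_with_top in auto)

lemma height_attained:
  assumes "p \<in> P"
  obtains C where "is_chain P le C" "p \<in> C" "\<forall>x\<in>C. le x p" "card C = height P le p"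
proof -
  have "{p} \<in> {C. is_chain P le C \<and> p \<in> C \<and> (\<forall>x\<in>C. le x p)}"
    using assms refl by (auto simp: is_chain_def)
  then have "height P le p \<in> card ` {C. is_chain P le C \<and> p \<in> C \<and> (\<forall>x\<in>C. le x p)}"
    unfolding height_def by (intro Max_in finite_imageI finite_chains_with_top) auto
  then show ?thesis
    using that by auto
qed

lemma height_ge_1: "p \<in> P \<Longrightarrow> 1 \<le> height P le p"
  using card_le_height[of "{p}" p] refl by (auto simp: is_chain_def)

lemma height_strict_mono:
  assumes "q \<in> P" "p \<in> P" "le q p" "q \<noteq> p"
  shows "height P le q < height P le p"
proof -
  obtain C where C: "is_chain P le C" "q \<in> C" "\<forall>x\<in>C. le x q" "card C = height P le q"
    using height_attained assms(1) by blast
  have below_p: "\<forall>x\<in>insert p C. le x p"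
    using C assms chain_subset refl trans by blast
  have "is_chain P le (insert p C)"
    using C(1) below_p assms(2) unfolding is_chain_def by blast
  then have "card (insert p C) \<le> height P le p"
    using card_le_height below_p by blast
  moreover have "p \<notin> C"
    using C assms antisym chain_subset by blast
  ultimately show ?thesis
    using C chain_finite by simp
qed

lemma height_mono: "x \<in> P \<Longrightarrow> y \<in> P \<Longrightarrow> le y x \<Longrightarrow> height P le y \<le> height P le x"
  using height_strict_mono[of y x] by (cases "y = x") auto

text \<open>Heights are strictly monotone, so the element of largest height is the top of a chain.\<close>

lemma chain_has_greatest:
  assumes "is_chain P le C" "C \<noteq> {}"
  obtains y where "y \<in> C" "\<forall>z\<in>C. le z y"
proof -
  obtain y where y: "y \<in> C" "height P le y = Max (height P le ` C)"
    using Max_in[of "height P le ` C"] assms chain_finite by fastforce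
  have "le z y" if z: "z \<in> C" for z
  proof (cases "z = y")
    case True
    then show ?thesis
      using z assms(1) chain_subset refl by blast
  next
    case False
    have "\<not> height P le y < height P le z"
      using y z assms(1) chain_finite by (simp add: not_less)
    then have "\<not> le y z"
      using height_strict_mono[of y z] False z y(1) assms(1) chain_subset by blast
    then show ?thesis
      using chain_total[OF assms(1) z y(1)] by blast
  qed
  then show ?thesis
    using that y(1) by blast
qed

lemma exists_lower_cover:
  assumes "p \<in> P" "2 \<le> height P le p"
  shows "\<exists>y\<in>P. le y p \<and> y \<noteq> p \<and> height P le y = height P le p - 1"
proof -
  obtain C where C: "is_chain P le C" "p \<in> C" "\<forall>x\<in>C. le x p" "card C = height P le p"
    using height_attained assms(1) by blast
  have card_rest: "card (C - {p}) = height P le p - 1"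
    using C chain_finite by simp
  then have "C - {p} \<noteq> {}"
    using assms(2) by (intro notI) simp
  moreover have rest: "is_chain P le (C - {p})"
    using C(1) unfolding is_chain_def by blast
  ultimately obtain y where y: "y \<in> C - {p}" "\<forall>z\<in>C - {p}. le z y"
    using chain_has_greatest by blast
  have y_P: "y \<in> P"
    using y C(1) chain_subset by blast
  have "height P le p - 1 \<le> height P le y"
    using card_le_height[OF rest] y card_rest by simp
  moreover have "height P le y < height P le p"
    using height_strict_mono[of y p] y C(3) assms(1) y_P by blast
  ultimately show ?thesis
    using y y_P C(3) by (intro bexI[of _ y]) auto
qed

lemma minimal_elems_diff_height_ideal:
  "p \<in> minimal_elems le (P - height_ideal P le k) \<longleftrightarrow> p \<in> P \<and> height P le p = k + 1"
proof
  assume p: "p \<in> minimal_elems le (P - height_ideal P le k)"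
  then have pP: "p \<in> P" and above_k: "k < height P le p"
    by (auto simp: minimal_elems_def height_ideal_def)
  have "height P le p = k + 1"
  proof (rule ccontr)
    assume "height P le p \<noteq> k + 1"
    then obtain y where "y \<in> P" "le y p" "y \<noteq> p" "k < height P le y"
      using exists_lower_cover[OF pP] above_k by fastforce
    then show False
      using p by (auto simp: minimal_elems_def height_ideal_def)
  qed
  then show "p \<in> P \<and> height P le p = k + 1"
    using pP by blast
next
  assume "p \<in> P \<and> height P le p = k + 1"
  then show "p \<in> minimal_elems le (P - height_ideal P le k)"
    using height_strict_mono[of _ p] by (force simp: minimal_elems_def height_ideal_def)
qed

lemma height_ideal_in_order_ideals: "height_ideal P le k \<in> order_ideals P le"
  unfolding order_ideals_def height_ideal_def
  using height_mono order.trans by blast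

lemma toggle_plus_height_ideal:
  "toggle_plus P le p (height_ideal P le k) = (if p \<in> P \<and> height P le p = k + 1 then 1 else 0)"
  unfolding toggle_plus_def minimal_elems_diff_height_ideal by (auto simp: height_ideal_def)

end

locale graded_poset = finite_poset +
  fixes r :: nat
  assumes graded: "graded_of_rank P le r"
begin

abbreviation depth :: "'a \<Rightarrow> nat" where
  "depth \<equiv> height P (\<lambda>x y. le y x)"

lemma card_chain_le:
  assumes "is_chain P le C"
  shows "card C \<le> r + 1"
proof -
  obtain D where D: "is_maximal_chain P le D" "C \<subseteq> D"
    using maximal_chain_extension assms by blast
  then have "card C \<le> card D"
    using card_mono chain_finite unfolding is_maximal_chain_def by blast
  also have "card D = r + 1"
    using D(1) graded unfolding graded_of_rank_def by blast
  finally show ?thesis .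
qed

text \<open>Gluing longest chains below and above \<open>p\<close> gives a chain of \<open>height + depth - 1 \<le> r + 1\<close>
  elements; conversely a maximal chain through \<open>p\<close> has \<open>r + 1\<close> elements, at most \<open>height\<close>
  of them below \<open>p\<close> and at most \<open>depth\<close> above.\<close>

lemma height_plus_depth:
  assumes "p \<in> P"
  shows "height P le p + depth p = r + 2"
proof -
  obtain C where C: "is_chain P le C" "p \<in> C" "\<forall>x\<in>C. le x p" "card C = height P le p"
    using height_attained assms by blast
  obtain E where E: "is_chain P (\<lambda>x y. le y x) E" "p \<in> E" "\<forall>x\<in>E. le p x" "card E = depth p"
    by (rule finite_poset.height_attained[OF dual assms])
  have E_chain: "is_chain P le E"
    using E(1) is_chain_dual by blast
  have CE: "is_chain P le (C \<union> E)"
    unfolding is_chain_def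
  proof (intro conjI ballI)
    show "C \<union> E \<subseteq> P"
      using C(1) E_chain chain_subset by blast
    have across: "le x y" if "x \<in> C" "y \<in> E" for x y
      using trans[of x p y] that C E(3) E_chain assms chain_subset by blast
    fix a b assume "a \<in> C \<union> E" "b \<in> C \<union> E"
    then show "le a b \<or> le b a"
      using chain_total C(1) E_chain across by blast
  qed
  have "x = p" if "x \<in> C" "x \<in> E" for x
    using antisym[of x p] that C(1,3) E(3) E_chain chain_subset assms by blast
  then have "C \<inter> E = {p}"
    using C(2) E(2) by blast
  then have card_CE: "card (C \<union> E) + 1 = height P le p + depth p"
    using card_Un_Int[of C E] C(1,4) E(4) E_chain chain_finite by simp
  obtain D where D: "is_maximal_chain P le D" "C \<union> E \<subseteq> D"
    using maximal_chain_extension CE by blast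
  have D_chain: "is_chain P le D" and card_D: "card D = r + 1"
    using D graded unfolding is_maximal_chain_def graded_of_rank_def by blast+
  let ?A = "{x\<in>D. le x p}" and ?B = "{x\<in>D. le p x}"
  have p_D: "p \<in> D"
    using C(2) D(2) by blast
  have A_chain: "is_chain P le ?A" and B_chain: "is_chain P (\<lambda>x y. le y x) ?B"
    using D_chain unfolding is_chain_def by blast+
  have "card ?A \<le> height P le p"
    by (rule card_le_height[OF A_chain]) (simp_all add: p_D refl assms)
  moreover have "card ?B \<le> depth p"
    by (rule finite_poset.card_le_height[OF dual B_chain]) (simp_all add: p_D refl assms)
  moreover have "card D + 1 \<le> card ?A + card ?B"
  proof -
    have "D = ?A \<union> ?B"
      using D_chain p_D unfolding is_chain_def by blast
    moreover have "0 < card (?A \<inter> ?B)"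
      using D_chain chain_finite p_D refl assms by (auto simp: card_gt_0_iff)
    moreover have "finite ?A" "finite ?B"
      using D_chain chain_finite by auto
    ultimately show ?thesis
      using card_Un_Int[of ?A ?B] by simp
  qed
  ultimately show ?thesis
    using card_CE card_D card_chain_le[OF CE] by linarith
qed

lemma height_le: "p \<in> P \<Longrightarrow> height P le p \<le> r + 1"
  using height_plus_depth finite_poset.height_ge_1[OF dual] by fastforce

lemma exists_upper_cover:
  assumes "p \<in> P" "height P le p \<le> r"
  shows "\<exists>y\<in>P. le p y \<and> y \<noteq> p \<and> height P le y = height P le p + 1"
proof -
  have "2 \<le> depth p"
    using height_plus_depth assms by fastforce
  then obtain y where "y \<in> P" "le p y" "y \<noteq> p" "depth y = depth p - 1"
    using finite_poset.exists_lower_cover[OF dual assms(1)] by blast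
  then show ?thesis
    using height_plus_depth[of p] height_plus_depth[of y] assms(1) \<open>2 \<le> depth p\<close>
    by (intro bexI[of _ y]) auto
qed

lemma maximal_elems_height_ideal:
  assumes "k \<le> r + 1"
  shows "maximal_elems le (height_ideal P le k) = {p\<in>P. height P le p = k}"
proof (intro equalityI subsetI)
  fix p assume p: "p \<in> maximal_elems le (height_ideal P le k)"
  then have pP: "p \<in> P" and "height P le p \<le> k"
    by (auto simp: maximal_elems_def height_ideal_def)
  moreover have "\<not> height P le p < k"
  proof
    assume "height P le p < k"
    then obtain y where "y \<in> P" "le p y" "y \<noteq> p" "height P le y \<le> k"
      using exists_upper_cover[OF pP] assms by fastforce
    then show False
      using p by (auto simp: maximal_elems_def height_ideal_def)
  qed
  ultimately show "p \<in> {p\<in>P. height P le p = k}"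
    by simp
next
  fix p assume "p \<in> {p\<in>P. height P le p = k}"
  then show "p \<in> maximal_elems le (height_ideal P le k)"
    using height_strict_mono[of p] by (force simp: maximal_elems_def height_ideal_def)
qed

lemma toggle_minus_height_ideal:
  "k \<le> r + 1 \<Longrightarrow>
    toggle_minus le p (height_ideal P le k) = (if p \<in> P \<and> height P le p = k then 1 else 0)"
  unfolding toggle_minus_def using maximal_elems_height_ideal by (auto simp: height_ideal_def)

definition height_ideal_distribution :: "'a set \<Rightarrow> real" where
  "height_ideal_distribution = empirical_distribution {0..r + 1} (height_ideal P le)"

lemma expect_height_ideal_distribution:
  "expect P le height_ideal_distribution f
    = (\<Sum>k\<in>{0..r + 1}. f (height_ideal P le k)) / real (r + 2)"
  unfolding height_ideal_distribution_def
  by (subst expect_empirical_distribution)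
    (auto simp: finite_order_ideals finite height_ideal_in_order_ideals)

lemma is_distribution_height_ideal_distribution: "is_distribution P le height_ideal_distribution"
  unfolding height_ideal_distribution_def
  by (rule is_distribution_empirical_distribution)
    (auto simp: finite_order_ideals finite height_ideal_in_order_ideals)

lemma toggle_symmetric_height_ideal_distribution:
  "toggle_symmetric P le height_ideal_distribution"
  unfolding toggle_symmetric_def
proof
  fix p assume p: "p \<in> P"
  have "(\<Sum>k\<in>{0..r + 1}. toggle_plus P le p (height_ideal P le k))
      = (\<Sum>k\<in>{0..r + 1}. if k = height P le p - 1 then 1 else 0)"
    using height_ge_1[OF p] by (intro sum.cong) (auto simp: toggle_plus_height_ideal p)
  also have "\<dots> = (\<Sum>k\<in>{0..r + 1}. if k = height P le p then 1 else 0)"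
    using height_le[OF p] height_ge_1[OF p] by simp
  also have "\<dots> = (\<Sum>k\<in>{0..r + 1}. toggle_minus le p (height_ideal P le k))"
    by (intro sum.cong) (auto simp: toggle_minus_height_ideal p)
  finally show "expect P le height_ideal_distribution (toggle_plus P le p)
      = expect P le height_ideal_distribution (toggle_minus le p)"
    by (simp add: expect_height_ideal_distribution)
qed

lemma expect_ddeg_height_ideal_distribution:
  "expect P le height_ideal_distribution (ddeg le) = real (card P) / real (r + 2)"
proof -
  have "(\<Sum>k\<in>{0..r + 1}. ddeg le (height_ideal P le k))
      = (\<Sum>k\<in>{0..r + 1}. \<Sum>p\<in>{p\<in>P. height P le p = k}. 1)"
    by (intro sum.cong) (auto simp: ddeg_def maximal_elems_height_ideal)
  also have "\<dots> = (\<Sum>p\<in>P. 1)"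
    by (rule sum.group) (auto simp: finite dest: height_le)
  finally show ?thesis
    by (simp add: expect_height_ideal_distribution)
qed

end

theorem proposition3p8:
  fixes P :: "'a set" and le :: "'a \<Rightarrow> 'a \<Rightarrow> bool" and r :: nat
  assumes "finite P" and "poset_on P le" and "graded_of_rank P le r"
    and "tCDE P le"
  shows "expect P le (uni P le) (ddeg le) = real (card P) / real (r + 2)"
proof -
  interpret graded_poset P le r
    using assms by unfold_locales
  show ?thesis
    using assms(4) is_distribution_height_ideal_distribution
      toggle_symmetric_height_ideal_distribution expect_ddeg_height_ideal_distribution
    unfolding tCDE_def by metis
qed

end
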